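(* Let $\mathbb{M}$ be $(1+3)$-dimensional Minkowski spacetime and $\overline{\mathcal{P}}_+^\uparrow=\mathbb{R}^4\rtimes SL(2,\mathbb{C})$ the double cover of the proper orthochronous Poincaré group, with elements $(a,A)$, and let $\Lambda:SL(2,\mathbb{C})\to SO^+(1,3)$ be the covering homomorphism. Let $\mathcal{H}$ be a Hilbert space, $\mathcal{D}\subset\mathcal{H}$ dense, $U$ a unitary representation of $\overline{\mathcal{P}}_+^\uparrow$ on $\mathcal{H}$, and $S:SL(2,\mathbb{C})\to GL(\mathbb{C}^n)$ a multiplicity-free finite-dimensional representation with no trivial sub-representations. Let $\hat\psi=\{\hat\psi_\alpha:\mathbb{M}\to\mathcal{L}(\mathcal{D},\mathcal{H})\}_{\alpha=1}^n$. Suppose (1) $U(a,A)\mathcal{D}\subset\mathcal{D}$ and $U(a,A)^\dagger\mathcal{D}\subset\mathcal{D}$ for all $(a,A)\in\overline{\mathcal{P}}_+^\uparrow$; (2) $\hat\psi_\alpha(x)\mathcal{D}\subset\mathcal{D}$ and $\hat\psi_\alpha(x)^\dagger\mathcal{D}\subset\mathcal{D}$ for all $x\in\mathbb{M}$ and all $\alpha$; (3) for all $(a,A)\in\overline{\mathcal{P}}_+^\uparrow$, $x\in\mathbb{M}$, $\alpha\in\{1,\dots,n\}$, on $\mathcal{D}$: $U(a,A)\hat\psi_\alpha(x)U(a,A)^\dagger=\sum_{\beta=1}^nS[A^{-1}]_{\alpha\beta}\hat\psi_\beta(\Lambda(A)x+a)$; (4) there exists a nonzero vector $\ket\Omega\in\mathcal{D}$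 with $U(a,A)\ket\Omega=\ket\Omega$ for all $(a,A)\in\overline{\mathcal{P}}_+^\uparrow$. Then $\hat\psi_\alpha(x)\ket\Omega=\hat\psi_\alpha(x)^\dagger\ket\Omega=0$ for all $x\in\mathbb{M}$ and all $\alpha\in\{1,\dots,n\}$.
   Context: $\mathcal{L}(\mathcal{D},\mathcal{H})$ denotes the linear maps from $\mathcal{D}$ into $\mathcal{H}$. No continuity of $U$ is assumed. A finite-dimensional representation is multiplicity-free if, in its decomposition into irreducible sub-representations, no irreducible representation occurs more than once; "no trivial sub-representations" means the one-dimensional trivial representation does not occur. *)

theory Defs
  imports "HOL-Analysis.Analysis" "HOL-Library.Numeral_Type"
begin

text \<open>Inner product is conjugate-linear in the first and linear in the second argument
  (physics convention). Norm derived from the inner product.\<close>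

definition hnorm :: "('h \<Rightarrow> 'h \<Rightarrow> complex) \<Rightarrow> 'h \<Rightarrow> real" where
  "hnorm ip x = sqrt (Re (ip x x))"

definition complex_hilbert_space ::
  "(complex \<Rightarrow> 'h::ab_group_add \<Rightarrow> 'h) \<Rightarrow> ('h \<Rightarrow> 'h \<Rightarrow> complex) \<Rightarrow> bool" where
  "complex_hilbert_space sc ip \<longleftrightarrow>
     vector_space sc \<and>
     (\<forall>x y z. ip x (y + z) = ip x y + ip x z) \<and>
     (\<forall>x y c. ip x (sc c y) = c * ip x y) \<and>
     (\<forall>x y. ip y x = cnj (ip x y)) \<and>
     (\<forall>x. Im (ip x x) = 0 \<and> Re (ip x x) \<ge> 0) \<and>
     (\<forall>x. ip x x = 0 \<longrightarrow> x = 0) \<and>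
     (\<forall>f :: nat \<Rightarrow> 'h.
        (\<forall>e>0. \<exists>N. \<forall>m n. N \<le> m \<and> N \<le> n \<longrightarrow> hnorm ip (f m - f n) < e) \<longrightarrow>
        (\<exists>l. (\<lambda>n. hnorm ip (f n - l)) \<longlonglongrightarrow> 0))"

definition is_subspace :: "(complex \<Rightarrow> 'h::ab_group_add \<Rightarrow> 'h) \<Rightarrow> 'h set \<Rightarrow> bool" where
  "is_subspace sc D \<longleftrightarrow> 0 \<in> D \<and> (\<forall>x\<in>D. \<forall>y\<in>D. x + y \<in> D) \<and> (\<forall>c. \<forall>x\<in>D. sc c x \<in> D)"

definition dense_in :: "('h::ab_group_add \<Rightarrow> 'h \<Rightarrow> complex) \<Rightarrow> 'h set \<Rightarrow> bool" where
  "dense_in ip D \<longleftrightarrow> (\<forall>x. \<forall>e>0. \<exists>d\<in>D. hnorm ip (x - d) < e)"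

text \<open>A linear map defined on the subspace D (values outside D are irrelevant).\<close>
definition linear_on :: "(complex \<Rightarrow> 'h::ab_group_add \<Rightarrow> 'h) \<Rightarrow> 'h set \<Rightarrow> ('h \<Rightarrow> 'h) \<Rightarrow> bool" where
  "linear_on sc D T \<longleftrightarrow> (\<forall>x\<in>D. \<forall>y\<in>D. T (x + y) = T x + T y) \<and> (\<forall>c. \<forall>x\<in>D. T (sc c x) = sc c (T x))"

definition adj_dom :: "('h \<Rightarrow> 'h \<Rightarrow> complex) \<Rightarrow> 'h set \<Rightarrow> ('h \<Rightarrow> 'h) \<Rightarrow> 'h set" where
  "adj_dom ip D T = {v. \<exists>u. \<forall>w\<in>D. ip u w = ip v (T w)}"

definition adj :: "('h \<Rightarrow> 'h \<Rightarrow> complex) \<Rightarrow> 'h set \<Rightarrow> ('h \<Rightarrow> 'h) \<Rightarrow> 'h \<Rightarrow> 'h" where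
  "adj ip D T v = (THE u. \<forall>w\<in>D. ip u w = ip v (T w))"

definition unitary_op :: "(complex \<Rightarrow> 'h::ab_group_add \<Rightarrow> 'h) \<Rightarrow> ('h \<Rightarrow> 'h \<Rightarrow> complex) \<Rightarrow> ('h \<Rightarrow> 'h) \<Rightarrow> bool" where
  "unitary_op sc ip T \<longleftrightarrow> linear_on sc UNIV T \<and> (\<forall>x y. ip (T x) (T y) = ip x y) \<and> surj T"

definition SL2C :: "(complex^2^2) set" where
  "SL2C = {A. det A = 1}"

definition cadj :: "complex^2^2 \<Rightarrow> complex^2^2" where
  "cadj A = (\<chi> i j. cnj (A $ j $ i))"

text \<open>Minkowski vector x = (x0,x1,x2,x3) as Hermitian matrix x0 I + x1 s1 + x2 s2 + x3 s3.\<close>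
definition herm :: "real^4 \<Rightarrow> complex^2^2" where
  "herm x = (\<chi> i j.
     if i = 0 \<and> j = 0 then complex_of_real (x$0 + x$3)
     else if i = 0 \<and> j = 1 then Complex (x$1) (- (x$2))
     else if i = 1 \<and> j = 0 then Complex (x$1) (x$2)
     else complex_of_real (x$0 - x$3))"

text \<open>Covering homomorphism: Lambda(A) x = herm^-1 (A herm(x) A^*).\<close>
definition lorentz :: "complex^2^2 \<Rightarrow> real^4 \<Rightarrow> real^4" where
  "lorentz A x = (let M = A ** herm x ** cadj A in
     (\<chi> k. if k = 0 then Re (M$0$0 + M$1$1) / 2
           else if k = 1 then Re (M$1$0)
           else if k = 2 then Im (M$1$0)
           else Re (M$0$0 - M$1$1) / 2))"

definition poincare :: "((real^4) \<times> (complex^2^2)) set" where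
  "poincare = {(a, A). A \<in> SL2C}"

definition pmult :: "(real^4) \<times> (complex^2^2) \<Rightarrow> (real^4) \<times> (complex^2^2) \<Rightarrow> (real^4) \<times> (complex^2^2)" where
  "pmult g h = (fst g + lorentz (snd g) (fst h), snd g ** snd h)"

definition unitary_rep_poincare ::
  "(complex \<Rightarrow> 'h::ab_group_add \<Rightarrow> 'h) \<Rightarrow> ('h \<Rightarrow> 'h \<Rightarrow> complex) \<Rightarrow> ((real^4) \<times> (complex^2^2) \<Rightarrow> 'h \<Rightarrow> 'h) \<Rightarrow> bool" where
  "unitary_rep_poincare sc ip U \<longleftrightarrow>
     (\<forall>g\<in>poincare. unitary_op sc ip (U g)) \<and>
     U (0, mat 1) = id \<and>
     (\<forall>g\<in>poincare. \<forall>h\<in>poincare. U (pmult g h) = U g \<circ> U h)"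

definition rep_SL2C :: "(complex^2^2 \<Rightarrow> complex^'n^'n) \<Rightarrow> bool" where
  "rep_SL2C S \<longleftrightarrow> S (mat 1) = mat 1 \<and> (\<forall>A\<in>SL2C. \<forall>B\<in>SL2C. S (A ** B) = S A ** S B)"

definition csubspace :: "(complex^'n) set \<Rightarrow> bool" where
  "csubspace V \<longleftrightarrow> 0 \<in> V \<and> (\<forall>x\<in>V. \<forall>y\<in>V. x + y \<in> V) \<and> (\<forall>c. \<forall>x\<in>V. c *s x \<in> V)"

definition invariant_sub :: "(complex^2^2 \<Rightarrow> complex^'n^'n) \<Rightarrow> (complex^'n) set \<Rightarrow> bool" where
  "invariant_sub S V \<longleftrightarrow> csubspace V \<and> (\<forall>A\<in>SL2C. \<forall>v\<in>V. S A *v v \<in> V)"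

definition irreducible_sub :: "(complex^2^2 \<Rightarrow> complex^'n^'n) \<Rightarrow> (complex^'n) set \<Rightarrow> bool" where
  "irreducible_sub S V \<longleftrightarrow> invariant_sub S V \<and> V \<noteq> {0} \<and>
     (\<forall>W. invariant_sub S W \<and> W \<subseteq> V \<longrightarrow> W = {0} \<or> W = V)"

definition iso_sub :: "(complex^2^2 \<Rightarrow> complex^'n^'n) \<Rightarrow> (complex^'n) set \<Rightarrow> (complex^'n) set \<Rightarrow> bool" where
  "iso_sub S V W \<longleftrightarrow> (\<exists>T. bij_betw T V W \<and>
     (\<forall>x\<in>V. \<forall>y\<in>V. T (x + y) = T x + T y) \<and> (\<forall>c. \<forall>x\<in>V. T (c *s x) = c *s T x) \<and>
     (\<forall>A\<in>SL2C. \<forall>v\<in>V. T (S A *v v) = S A *v T v))"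

definition multiplicity_free :: "(complex^2^2 \<Rightarrow> complex^'n^'n) \<Rightarrow> bool" where
  "multiplicity_free S \<longleftrightarrow> (\<exists>(V :: nat \<Rightarrow> (complex^'n) set) k.
     (\<forall>i<k. irreducible_sub S (V i)) \<and>
     (\<forall>x. \<exists>v. (\<forall>i<k. v i \<in> V i) \<and> x = (\<Sum>i<k. v i)) \<and>
     (\<forall>v. (\<forall>i<k. v i \<in> V i) \<and> (\<Sum>i<k. v i) = 0 \<longrightarrow> (\<forall>i<k. v i = 0)) \<and>
     (\<forall>i<k. \<forall>j<k. i \<noteq> j \<longrightarrow> \<not> iso_sub S (V i) (V j)))"

definition no_trivial_subrep :: "(complex^2^2 \<Rightarrow> complex^'n^'n) \<Rightarrow> bool" where
  "no_trivial_subrep S \<longleftrightarrow> (\<forall>v. (\<forall>A\<in>SL2C. S A *v v = v) \<longrightarrow> v = 0)"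

end

theory Submission
  imports Defs
begin

(* The vectors v_a = psi_a(0) Omega span a finite-dimensional subspace which, by covariance at x =
   0 and invariance of Omega, is invariant under the unitary action A |-> U(0,A) of SL(2,C). Every
   finite-dimensional unitary representation of SL(2,C) is trivial: for a unipotent one-parameter
   subgroup E(t) all E(t) with t <> 0 are conjugate, so the character t |-> tr R(E t) is constant
   off 0; comparing traces of R(k) R(-l) shows that R(1), ..., R(N) would be linearly independent
   for every N unless the character is constant everywhere, so tr R(E t) = tr R(1); a unitary
   matrix whose trace equals the dimension is the identity, and the upper and lower unipotents
   generate SL(2,C). Consequently v_a = sum_b S(A)_ab v_b for every A, so for each w the vector
   (<w, v_b>)_b is fixed by S and vanishes because S has no trivial sub-representation; taking w =
   v_a gives v_a = 0. The vectors psi_a(0)^+ Omega transform with the conjugate matrices and vanish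
   for the same reason, and translation covariance carries both statements from 0 to every x. *)

section \<open>SL(2,C) and its unipotent generators\<close>

definition mat2 :: "'a \<Rightarrow> 'a \<Rightarrow> 'a \<Rightarrow> 'a \<Rightarrow> 'a^2^2" where
  "mat2 a b c d = (\<chi> i j. if i = 1 then (if j = 1 then a else b) else (if j = 1 then c else d))"

lemma mat2_nth [simp]:
  "mat2 a b c d $ 1 $ 1 = a" "mat2 a b c d $ 1 $ 2 = b"
  "mat2 a b c d $ 2 $ 1 = c" "mat2 a b c d $ 2 $ 2 = d"
  by (simp_all add: mat2_def)

lemma mat2_eq_iff: "mat2 a b c d = mat2 a' b' c' d' \<longleftrightarrow> a = a' \<and> b = b' \<and> c = c' \<and> d = d'"
  by (metis mat2_nth)

lemma mat2_cases: obtains a b c d where "A = mat2 a b c d"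
proof
  show "A = mat2 (A$1$1) (A$1$2) (A$2$1) (A$2$2)"
    by (simp add: vec_eq_iff forall_2)
qed

lemma mat2_mult:
  "mat2 a b c d ** mat2 a' b' c' d' =
     mat2 (a*a' + b*c') (a*b' + b*d') (c*a' + d*c') (c*b' + d*d')"
  by (simp add: vec_eq_iff forall_2 matrix_matrix_mult_def sum_2)

lemma mat2_one: "mat 1 = mat2 1 0 0 1"
  by (simp add: vec_eq_iff forall_2 mat_def)

lemma det_mat2: "det (mat2 a b c d) = a*d - b*c"
  by (simp add: det_2)

lemma mat2_in_SL2C_iff: "mat2 a b c d \<in> SL2C \<longleftrightarrow> a*d - b*c = 1"
  by (simp add: SL2C_def det_mat2)

lemma SL2C_one: "mat 1 \<in> SL2C"
  by (simp add: SL2C_def)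

lemma SL2C_mult: "A \<in> SL2C \<Longrightarrow> B \<in> SL2C \<Longrightarrow> A ** B \<in> SL2C"
  by (simp add: SL2C_def det_mul)

lemma matrix_inv_mat2:
  assumes "mat2 a b c d \<in> SL2C"
  shows "matrix_inv (mat2 a b c d) = mat2 d (-b) (-c) a"
proof -
  let ?A = "mat2 a b c d" and ?B = "mat2 d (-b) (-c) a"
  have det: "a*d - b*c = 1" using assms by (simp add: mat2_in_SL2C_iff)
  have inv: "?A ** ?B = mat 1" "?B ** ?A = mat 1"
    using det by (simp_all add: mat2_mult mat2_one algebra_simps)
  have "?A ** matrix_inv ?A = mat 1"
    unfolding matrix_inv_def using inv by (rule conjunct1[OF someI[of _ ?B], OF conjI])
  then have "?B = ?B ** (?A ** matrix_inv ?A)" by simp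
  also have "\<dots> = matrix_inv ?A" by (simp add: matrix_mul_assoc inv(2))
  finally show ?thesis ..
qed

lemma matrix_inv_SL2C:
  assumes "A \<in> SL2C"
  shows "matrix_inv A \<in> SL2C" "matrix_inv (matrix_inv A) = A"
proof -
  obtain a b c d where A: "A = mat2 a b c d" by (rule mat2_cases)
  with assms have inv: "matrix_inv A = mat2 d (-b) (-c) a" and det: "a*d - b*c = 1"
    by (simp_all add: matrix_inv_mat2 mat2_in_SL2C_iff)
  show inv_SL2C: "matrix_inv A \<in> SL2C"
    using det by (simp add: inv mat2_in_SL2C_iff algebra_simps)
  show "matrix_inv (matrix_inv A) = A"
    unfolding inv using matrix_inv_mat2[OF inv_SL2C[unfolded inv]] by (simp add: A)
qed

lemma matrix_inv_one_SL2C: "matrix_inv (mat 1 :: complex^2^2) = mat 1"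
  using matrix_inv_mat2[of 1 0 0 1] by (simp add: mat2_one mat2_in_SL2C_iff)

definition upper_unipotent :: "complex \<Rightarrow> complex^2^2" where
  "upper_unipotent t = mat2 1 t 0 1"

definition lower_unipotent :: "complex \<Rightarrow> complex^2^2" where
  "lower_unipotent t = mat2 1 0 t 1"

definition diag_SL2 :: "complex \<Rightarrow> complex^2^2" where
  "diag_SL2 s = mat2 s 0 0 (1/s)"

lemma upper_unipotent_SL2C: "upper_unipotent t \<in> SL2C"
  by (simp add: upper_unipotent_def mat2_in_SL2C_iff)

lemma lower_unipotent_SL2C: "lower_unipotent t \<in> SL2C"
  by (simp add: lower_unipotent_def mat2_in_SL2C_iff)

lemma diag_SL2_SL2C: "s \<noteq> 0 \<Longrightarrow> diag_SL2 s \<in> SL2C"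
  by (simp add: diag_SL2_def mat2_in_SL2C_iff)

lemma upper_unipotent_add: "upper_unipotent (s + t) = upper_unipotent s ** upper_unipotent t"
  by (simp add: upper_unipotent_def mat2_mult add.commute)

lemma lower_unipotent_add: "lower_unipotent (s + t) = lower_unipotent s ** lower_unipotent t"
  by (simp add: lower_unipotent_def mat2_mult add.commute)

lemma upper_unipotent_0: "upper_unipotent 0 = mat 1"
  by (simp add: upper_unipotent_def mat2_one)

lemma lower_unipotent_0: "lower_unipotent 0 = mat 1"
  by (simp add: lower_unipotent_def mat2_one)

lemma diag_SL2_inverse: "s \<noteq> 0 \<Longrightarrow> diag_SL2 (1/s) ** diag_SL2 s = mat 1"
  by (simp add: diag_SL2_def mat2_mult mat2_one)

lemma upper_unipotent_conj:
  assumes "t \<noteq> 0"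
  obtains C C' where "C \<in> SL2C" "C' \<in> SL2C" "C' ** C = mat 1"
    "upper_unipotent t = C ** upper_unipotent 1 ** C'"
proof
  define s where "s = csqrt t"
  have s: "s * s = t" "s \<noteq> 0"
    using power2_csqrt[of t] assms by (auto simp: s_def power2_eq_square)
  show "diag_SL2 s \<in> SL2C" "diag_SL2 (1/s) \<in> SL2C" "diag_SL2 (1/s) ** diag_SL2 s = mat 1"
    using s by (simp_all add: diag_SL2_SL2C diag_SL2_inverse)
  show "upper_unipotent t = diag_SL2 s ** upper_unipotent 1 ** diag_SL2 (1/s)"
    using s by (simp add: upper_unipotent_def diag_SL2_def mat2_mult mat2_eq_iff)
qed

lemma lower_unipotent_conj:
  assumes "t \<noteq> 0"
  obtains C C' where "C \<in> SL2C" "C' \<in> SL2C" "C' ** C = mat 1"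
    "lower_unipotent t = C ** lower_unipotent 1 ** C'"
proof
  define s where "s = csqrt t"
  have s: "s * s = t" "s \<noteq> 0"
    using power2_csqrt[of t] assms by (auto simp: s_def power2_eq_square)
  show "diag_SL2 (1/s) \<in> SL2C" "diag_SL2 s \<in> SL2C" "diag_SL2 s ** diag_SL2 (1/s) = mat 1"
    using s diag_SL2_inverse[of "1/s"] by (simp_all add: diag_SL2_SL2C)
  show "lower_unipotent t = diag_SL2 (1/s) ** lower_unipotent 1 ** diag_SL2 s"
    using s by (simp add: lower_unipotent_def diag_SL2_def mat2_mult mat2_eq_iff)
qed

lemma SL2C_unipotent_induct [consumes 1, case_names upper lower mult]:
  assumes A: "A \<in> SL2C"
    and upper: "\<And>t. Q (upper_unipotent t)"
    and lower: "\<And>t. Q (lower_unipotent t)"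
    and mult: "\<And>A B. A \<in> SL2C \<Longrightarrow> B \<in> SL2C \<Longrightarrow> Q A \<Longrightarrow> Q B \<Longrightarrow> Q (A ** B)"
  shows "Q A"
proof -
  have lower_left_nonzero: "Q B" if B: "B \<in> SL2C" "B$2$1 \<noteq> 0" for B
  proof -
    obtain a b c d where B_eq: "B = mat2 a b c d" by (rule mat2_cases)
    have c: "c \<noteq> 0" and det: "a*d - b*c = 1"
      using B by (simp_all add: B_eq mat2_in_SL2C_iff)
    have "B = upper_unipotent ((a-1)/c) ** lower_unipotent c ** upper_unipotent ((d-1)/c)"
      using c det by (simp add: B_eq upper_unipotent_def lower_unipotent_def mat2_mult mat2_eq_iff
          field_simps)
    then show ?thesis
      using mult upper lower upper_unipotent_SL2C lower_unipotent_SL2C SL2C_mult by metis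
  qed
  show ?thesis
  proof (cases "A$2$1 = 0")
    case True
    obtain a b c d where A_eq: "A = mat2 a b c d" by (rule mat2_cases)
    have "a \<noteq> 0" using A True by (auto simp: A_eq mat2_in_SL2C_iff)
    then have "(lower_unipotent 1 ** A)$2$1 \<noteq> 0"
      using True by (simp add: A_eq lower_unipotent_def mat2_mult)
    then have "Q (lower_unipotent 1 ** A)"
      using lower_left_nonzero A lower_unipotent_SL2C SL2C_mult by blast
    moreover have "A = lower_unipotent (-1) ** (lower_unipotent 1 ** A)"
      by (simp add: matrix_mul_assoc lower_unipotent_add[symmetric] lower_unipotent_0)
    ultimately show ?thesis
      using mult lower A lower_unipotent_SL2C SL2C_mult by metis
  qed (use lower_left_nonzero A in blast)
qed

section \<open>Characters of matrix representations on unipotent subgroups\<close>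

lemma trace_sum_scaleR_mult:
  fixes M :: "'i \<Rightarrow> complex^'n::finite^'n"
  shows "trace ((\<Sum>k\<in>K. c k *\<^sub>R M k) ** X) = (\<Sum>k\<in>K. of_real (c k) * trace (M k ** X))"
proof (induction K rule: infinite_finite_induct)
  case (insert k K)
  have "trace ((c k *\<^sub>R M k) ** X) = of_real (c k) * trace (M k ** X)"
    by (simp add: trace_def matrix_matrix_mult_def sum_distrib_left mult.assoc)
      (simp add: scaleR_conv_of_real)
  with insert show ?case
    by (simp add: trace_add trace_mul_sym[of _ X] matrix_add_ldistrib)
qed (simp_all add: trace_def)

lemma trace_pairing_card_le:
  fixes M X :: "'i \<Rightarrow> complex^'n::finite^'n"
  assumes K: "finite K"
    and pairing: "\<And>k l. k \<in> K \<Longrightarrow> l \<in> K \<Longrightarrow> trace (M k ** X l) = (if k = l then \<mu> else \<tau>)"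
    and "\<mu> \<noteq> \<tau>" and "\<mu> \<noteq> \<tau> * (1 - of_nat (card K))"
  shows "card K \<le> DIM(complex^'n^'n)"
proof -
  have inj: "inj_on M K"
  proof (rule inj_onI)
    fix k l assume "k \<in> K" "l \<in> K" "M k = M l"
    then show "k = l" using pairing[of k l] pairing[of l l] \<open>\<mu> \<noteq> \<tau>\<close> by (auto split: if_splits)
  qed
  have "independent (M ` K)"
  proof
    assume "dependent (M ` K)"
    then obtain u where u: "\<exists>v\<in>M ` K. u v \<noteq> 0" "(\<Sum>v\<in>M ` K. u v *\<^sub>R v) = 0"
      using K by (auto simp: real_vector.dependent_finite)
    define c where "c k = (of_real (u (M k)) :: complex)" for k
    define C where "C = (\<Sum>k\<in>K. c k)"
    have c_eq: "c l * (\<mu> - \<tau>) = - C * \<tau>" if l: "l \<in> K" for l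
    proof -
      have "0 = trace ((\<Sum>k\<in>K. u (M k) *\<^sub>R M k) ** X l)"
        using u(2) by (simp add: sum.reindex[OF inj] trace_def matrix_matrix_mult_def)
      also have "\<dots> = (\<Sum>k\<in>K. c k * \<tau> + (if k = l then c k * (\<mu> - \<tau>) else 0))"
        using l by (auto simp: trace_sum_scaleR_mult pairing c_def algebra_simps intro!: sum.cong)
      also have "\<dots> = C * \<tau> + c l * (\<mu> - \<tau>)"
        using K l by (simp add: sum.distrib C_def sum_distrib_right)
      finally show ?thesis by (simp add: algebra_simps)
    qed
    obtain k0 where k0: "k0 \<in> K" "c k0 \<noteq> 0" using u(1) by (auto simp: c_def)
    have "c k = c k0" if "k \<in> K" for k
      using c_eq[OF that] c_eq[OF k0(1)] \<open>\<mu> \<noteq> \<tau>\<close> by (metis mult_right_cancel right_minus_eq)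
    then have "C = of_nat (card K) * c k0" by (simp add: C_def)
    then have "c k0 * (\<mu> - \<tau>) = c k0 * (- \<tau> * of_nat (card K))"
      using c_eq[OF k0(1)] by (simp add: algebra_simps)
    then have "\<mu> - \<tau> = - \<tau> * of_nat (card K)" using k0(2) by (metis mult_left_cancel)
    then have "\<mu> = \<tau> * (1 - of_nat (card K))" by (simp add: algebra_simps)
    with assms(4) show False ..
  qed
  then show ?thesis using independent_bound card_image[OF inj] by metis
qed

lemma additive_hom_trace_const:
  fixes R :: "complex \<Rightarrow> complex^'n::finite^'n"
  assumes add: "\<And>s t. R (s + t) = R s ** R t"
    and const: "\<And>t. t \<noteq> 0 \<Longrightarrow> trace (R t) = trace (R 1)"
  shows "trace (R t) = trace (R 0)"
proof -
  have "trace (R 1) = trace (R 0)"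
  proof (rule ccontr)
    define \<tau> and \<mu> where "\<tau> = trace (R 1)" and "\<mu> = trace (R 0)"
    assume "trace (R 1) \<noteq> trace (R 0)"
    then have "\<mu> \<noteq> \<tau>" by (simp add: \<tau>_def \<mu>_def)
    have pairing: "trace (R (of_nat k) ** R (- of_nat l)) = (if k = l then \<mu> else \<tau>)" for k l :: nat
      using add[of "of_nat k" "- of_nat l"] const[of "of_nat k - of_nat l"]
      by (cases "k = l") (simp_all add: \<tau>_def \<mu>_def)
    have card_le: "N \<le> DIM(complex^'n^'n)" if "\<mu> \<noteq> \<tau> * (1 - of_nat N)" for N
      using trace_pairing_card_le[of "{1..N}" "\<lambda>k. R (of_nat k)" "\<lambda>l. R (- of_nat l)" \<mu> \<tau>]
        pairing \<open>\<mu> \<noteq> \<tau>\<close> that by simp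
    \<comment> \<open>\<open>\<mu> = \<tau> (1 - N)\<close> can hold for at most one \<open>N\<close>, since \<open>\<tau> = \<mu> = 0\<close> is excluded.\<close>
    have "\<mu> \<noteq> \<tau> * (1 - of_nat (DIM(complex^'n^'n) + 1)) \<or>
          \<mu> \<noteq> \<tau> * (1 - of_nat (DIM(complex^'n^'n) + 2))"
      using \<open>\<mu> \<noteq> \<tau>\<close> by (auto simp: algebra_simps)
    then show False
      using card_le[of "DIM(complex^'n^'n) + 1"] card_le[of "DIM(complex^'n^'n) + 2"] by auto
  qed
  with const[of t] show ?thesis by (cases "t = 0") simp_all
qed

lemma trace_hom_unipotent_family:
  fixes R :: "complex^2^2 \<Rightarrow> complex^'n::finite^'n" and E :: "complex \<Rightarrow> complex^2^2"
  assumes R_mult: "\<And>A B. A \<in> SL2C \<Longrightarrow> B \<in> SL2C \<Longrightarrow> R (A ** B) = R A ** R B"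
    and E_add: "\<And>s t. E (s + t) = E s ** E t" and E_SL2C: "\<And>t. E t \<in> SL2C" and E_0: "E 0 = mat 1"
    and E_conj: "\<And>t. t \<noteq> 0 \<Longrightarrow> \<exists>C C'. C \<in> SL2C \<and> C' \<in> SL2C \<and> C' ** C = mat 1 \<and>
                   E t = C ** E 1 ** C'"
  shows "trace (R (E t)) = trace (R (mat 1))"
proof -
  have conj_invariant: "trace (R (E t)) = trace (R (E 1))" if t: "t \<noteq> 0" for t
  proof -
    obtain C C' where C: "C \<in> SL2C" "C' \<in> SL2C" "C' ** C = mat 1" "E t = C ** E 1 ** C'"
      using E_conj[OF t] by blast
    have "trace (R (E t)) = trace (R C ** (R (E 1) ** R C'))"
      using C E_SL2C[of 1] by (simp add: R_mult SL2C_mult matrix_mul_assoc)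
    also have "\<dots> = trace ((R (E 1) ** R C') ** R C)"
      by (rule trace_mul_sym)
    also have "\<dots> = trace (R (E 1) ** R (C' ** C))"
      by (simp add: R_mult[OF C(2,1)] matrix_mul_assoc)
    also have "\<dots> = trace (R (E 1))"
      using C(3) R_mult[OF E_SL2C SL2C_one, of 1] by simp
    finally show ?thesis .
  qed
  have "R (E (s + t)) = R (E s) ** R (E t)" for s t
    by (simp add: E_add E_SL2C R_mult)
  from additive_hom_trace_const[of "\<lambda>t. R (E t)", OF this conj_invariant]
  show ?thesis by (simp add: E_0)
qed

lemma trace_hom_upper_unipotent:
  fixes R :: "complex^2^2 \<Rightarrow> complex^'n::finite^'n"
  assumes "\<And>A B. A \<in> SL2C \<Longrightarrow> B \<in> SL2C \<Longrightarrow> R (A ** B) = R A ** R B"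
  shows "trace (R (upper_unipotent t)) = trace (R (mat 1))"
proof (rule trace_hom_unipotent_family[OF assms])
  show "\<exists>C C'. C \<in> SL2C \<and> C' \<in> SL2C \<and> C' ** C = mat 1 \<and>
          upper_unipotent t = C ** upper_unipotent 1 ** C'" if "t \<noteq> 0" for t
    using upper_unipotent_conj[OF that] by blast
qed (simp_all add: upper_unipotent_add upper_unipotent_SL2C upper_unipotent_0)

lemma trace_hom_lower_unipotent:
  fixes R :: "complex^2^2 \<Rightarrow> complex^'n::finite^'n"
  assumes "\<And>A B. A \<in> SL2C \<Longrightarrow> B \<in> SL2C \<Longrightarrow> R (A ** B) = R A ** R B"
  shows "trace (R (lower_unipotent t)) = trace (R (mat 1))"
proof (rule trace_hom_unipotent_family[OF assms])
  show "\<exists>C C'. C \<in> SL2C \<and> C' \<in> SL2C \<and> C' ** C = mat 1 \<and>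
          lower_unipotent t = C ** lower_unipotent 1 ** C'" if "t \<noteq> 0" for t
    using lower_unipotent_conj[OF that] by blast
qed (simp_all add: lower_unipotent_add lower_unipotent_SL2C lower_unipotent_0)

section \<open>Complex Hilbert spaces\<close>

locale hilbert_space =
  fixes sc :: "complex \<Rightarrow> 'h::ab_group_add \<Rightarrow> 'h" and ip :: "'h \<Rightarrow> 'h \<Rightarrow> complex"
  assumes hilbert: "complex_hilbert_space sc ip"
begin

lemma complex_hilbert_space_props:
  "vector_space sc"
  "\<forall>x y z. ip x (y + z) = ip x y + ip x z"
  "\<forall>x y c. ip x (sc c y) = c * ip x y"
  "\<forall>x y. ip y x = cnj (ip x y)"
  "\<forall>x. Im (ip x x) = 0 \<and> Re (ip x x) \<ge> 0"
  "\<forall>x. ip x x = 0 \<longrightarrow> x = 0"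
  by (insert hilbert, unfold complex_hilbert_space_def, elim conjE, assumption)+

sublocale vs: vector_space sc
  by (rule complex_hilbert_space_props(1))

lemmas ip_add_right = complex_hilbert_space_props(2)[rule_format]
  and ip_scale_right = complex_hilbert_space_props(3)[rule_format]
  and ip_cnj_swap = complex_hilbert_space_props(4)[rule_format]
  and ip_self_real = complex_hilbert_space_props(5)[rule_format, THEN conjunct1]
    complex_hilbert_space_props(5)[rule_format, THEN conjunct2]
  and ip_self_eq_0D = complex_hilbert_space_props(6)[rule_format]

lemma additive_ip_right: "Modules.additive (ip x)"
  by unfold_locales (rule ip_add_right)

lemma ip_add_left: "ip (x + y) z = ip x z + ip y z"
proof -
  have "ip (x + y) z = cnj (ip z (x + y))" by (rule ip_cnj_swap)
  then show ?thesis by (simp add: ip_add_right ip_cnj_swap[of z x] ip_cnj_swap[of z y])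
qed

lemma additive_ip_left: "Modules.additive (\<lambda>x. ip x z)"
  by unfold_locales (rule ip_add_left)

lemma ip_scale_left: "ip (sc c x) y = cnj c * ip x y"
proof -
  have "ip (sc c x) y = cnj (ip y (sc c x))" by (rule ip_cnj_swap)
  then show ?thesis by (simp add: ip_scale_right ip_cnj_swap[of y x])
qed

lemmas ip_zero_right [simp] = Modules.additive.zero[OF additive_ip_right]
  and ip_zero_left [simp] = Modules.additive.zero[OF additive_ip_left]
  and ip_diff_right = Modules.additive.diff[OF additive_ip_right]
  and ip_diff_left = Modules.additive.diff[OF additive_ip_left]
  and ip_sum_right = Modules.additive.sum[OF additive_ip_right]
  and ip_sum_left = Modules.additive.sum[OF additive_ip_left]

lemma ip_self_eq_0_iff: "ip x x = 0 \<longleftrightarrow> x = 0"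
  using ip_self_eq_0D by auto

lemma ip_self_eq_Re: "ip x x = of_real (Re (ip x x))"
  using ip_self_real(1)[of x] by (simp add: complex_eq_iff)

lemma dense_in_UNIV: "dense_in ip UNIV"
  unfolding dense_in_def
proof (intro allI impI)
  fix x :: 'h and e :: real
  assume "e > 0"
  then show "\<exists>d\<in>UNIV. hnorm ip (x - d) < e" by (intro bexI[of _ x]) (simp_all add: hnorm_def)
qed

lemma eq_0_if_orthogonal_dense:
  assumes D: "dense_in ip D" and orth: "\<And>w. w \<in> D \<Longrightarrow> ip z w = 0"
  shows "z = 0"
proof (rule ccontr)
  assume "z \<noteq> 0"
  then have pos: "Re (ip z z) > 0"
    using ip_self_real[of z] ip_self_eq_0_iff[of z] by (simp add: complex_eq_iff)
  then obtain d where d: "d \<in> D" "hnorm ip (z - d) < sqrt (Re (ip z z))"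
    using D unfolding dense_in_def by (meson real_sqrt_gt_zero)
  have "ip d z = 0" using orth[OF d(1)] ip_cnj_swap[of d z] by simp
  then have "ip (z - d) (z - d) = ip z z + ip d d"
    using orth[OF d(1)] by (simp add: ip_diff_left ip_diff_right)
  then have "hnorm ip (z - d) \<ge> sqrt (Re (ip z z))"
    using ip_self_real(2)[of d] by (simp add: hnorm_def)
  with d(2) show False by simp
qed

lemma adj_eqI:
  assumes "dense_in ip D" and "\<And>w. w \<in> D \<Longrightarrow> ip u w = ip v (T w)"
  shows "adj ip D T v = u"
  unfolding adj_def
proof (rule the_equality)
  fix u' assume "\<forall>w\<in>D. ip u' w = ip v (T w)"
  then have "ip (u' - u) w = 0" if "w \<in> D" for w
    using assms(2) that by (simp add: ip_diff_left)
  then show "u' = u" using eq_0_if_orthogonal_dense[OF assms(1)] by fastforce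
qed (use assms(2) in blast)

lemma ip_adj:
  assumes "dense_in ip D" "v \<in> adj_dom ip D T" "w \<in> D"
  shows "ip (adj ip D T v) w = ip v (T w)"
proof -
  obtain u where u: "\<And>w. w \<in> D \<Longrightarrow> ip u w = ip v (T w)"
    using assms(2) unfolding adj_dom_def by blast
  with adj_eqI[OF assms(1) u] assms(3) show ?thesis by simp
qed

lemma unitary_op_adj:
  assumes "unitary_op sc ip T"
  shows "adj ip UNIV T (T u) = u" and "T (adj ip UNIV T w) = w"
proof -
  show adj_T: "adj ip UNIV T (T u) = u" for u
    using assms by (intro adj_eqI[OF dense_in_UNIV]) (simp add: unitary_op_def)
  obtain u where "w = T u" using assms unfolding unitary_op_def by (metis surjD)
  then show "T (adj ip UNIV T w) = w" by (simp add: adj_T)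
qed

lemma linear_on_additive: "linear_on sc UNIV T \<Longrightarrow> Modules.additive T"
  by unfold_locales (simp add: linear_on_def)

lemmas linear_on_zero = Modules.additive.zero[OF linear_on_additive]

lemma linear_on_sum: "linear_on sc UNIV T \<Longrightarrow> T (sum f A) = (\<Sum>a\<in>A. T (f a))"
  by (rule Modules.additive.sum[OF linear_on_additive])

lemma linear_on_scale: "linear_on sc UNIV T \<Longrightarrow> T (sc c x) = sc c (T x)"
  by (simp add: linear_on_def)

lemma linear_on_span_invariant:
  assumes T: "linear_on sc UNIV T" and inv: "T ` S \<subseteq> vs.span S" and x: "x \<in> vs.span S"
  shows "T x \<in> vs.span S"
  using x
proof (induction rule: vs.span_induct)
  case base
  show ?case
    using T linear_on_zero[OF T]
    by (auto simp: vs.subspace_def linear_on_def vs.span_zero vs.span_add vs.span_scale)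
qed (use inv in blast)

lemma linear_on_fixes_span:
  assumes T: "linear_on sc UNIV T" and fixed: "\<And>x. x \<in> S \<Longrightarrow> T x = x" and x: "x \<in> vs.span S"
  shows "T x = x"
  using x
proof (induction rule: vs.span_induct)
  case base
  show ?case
    using T linear_on_zero[OF T] by (auto simp: vs.subspace_def linear_on_def)
qed (rule fixed)

end

section \<open>Finite-dimensional unitary representations of SL(2,C) are trivial\<close>

context hilbert_space
begin

text \<open>Gram-Schmidt on a fixed index set: a direction that is linearly dependent on the previous
  ones is recorded as the zero vector instead of being dropped.\<close>

definition orthonormal_or_zero :: "('n \<Rightarrow> 'h) \<Rightarrow> bool" where
  "orthonormal_or_zero f \<longleftrightarrow> (\<forall>a b. ip (f a) (f b) = (if a = b \<and> f a \<noteq> 0 then 1 else 0))"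

definition orth_proj :: "('n::finite \<Rightarrow> 'h) \<Rightarrow> 'h \<Rightarrow> 'h" where
  "orth_proj f x = (\<Sum>a\<in>UNIV. sc (ip (f a) x) (f a))"

lemma ip_orth_proj:
  assumes "orthonormal_or_zero f"
  shows "ip (f a) (orth_proj f x) = ip (f a) x"
proof -
  have "ip (f a) (orth_proj f x) = (\<Sum>b\<in>UNIV. ip (f b) x * ip (f a) (f b))"
    by (simp add: orth_proj_def ip_sum_right ip_scale_right)
  also have "\<dots> = (\<Sum>b\<in>UNIV. if b = a then ip (f a) x else 0)"
    using assms by (intro sum.cong) (auto simp: orthonormal_or_zero_def)
  finally show ?thesis by simp
qed

lemma ip_orth_proj_eq_0: "(\<And>a. ip e (f a) = 0) \<Longrightarrow> ip e (orth_proj f x) = 0"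
  by (simp add: orth_proj_def ip_sum_right ip_scale_right)

lemma linear_on_orth_proj: "linear_on sc UNIV (orth_proj f)"
  by (simp add: linear_on_def orth_proj_def ip_add_right ip_scale_right vs.scale_left_distrib
      sum.distrib vs.scale_sum_right)

lemma orth_proj_in_span: "orth_proj f x \<in> vs.span (range f)"
  unfolding orth_proj_def by (intro vs.span_sum vs.span_scale vs.span_base) simp

lemma orth_proj_fun_upd:
  assumes "f b = 0"
  shows "orth_proj (f(b := e)) x = orth_proj f x + sc (ip e x) e"
proof -
  have "orth_proj (f(b := e)) x = sc (ip e x) e + (\<Sum>a\<in>UNIV - {b}. sc (ip (f a) x) (f a))"
    unfolding orth_proj_def by (subst sum.remove[of _ b]) (auto intro!: sum.cong)
  moreover have "orth_proj f x = (\<Sum>a\<in>UNIV - {b}. sc (ip (f a) x) (f a))"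
    unfolding orth_proj_def using assms by (subst sum.remove[of _ b]) auto
  ultimately show ?thesis by (simp add: add.commute)
qed

lemma orthonormal_or_zero_extend:
  assumes f: "orthonormal_or_zero f" and fb: "f b = 0"
  obtains e where "orthonormal_or_zero (f(b := e))" "e \<in> vs.span (insert x (range f))"
    "orth_proj (f(b := e)) x = x" "\<And>y. orth_proj f y = y \<Longrightarrow> orth_proj (f(b := e)) y = y"
proof (cases "x = orth_proj f x")
  case True
  then show ?thesis using that[of 0] f fb by (simp add: vs.span_zero fun_upd_idem)
next
  case False
  define w where "w = x - orth_proj f x"
  define r where "r = sqrt (Re (ip w w))"
  define e where "e = sc (of_real (1/r)) w"
  have "w \<noteq> 0" using False by (simp add: w_def)
  then have "Re (ip w w) > 0"
    using ip_self_real[of w] ip_self_eq_0_iff[of w] by (simp add: complex_eq_iff)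
  then have r: "r > 0" "ip w w = of_real (r^2)"
    using ip_self_eq_Re[of w] by (simp_all add: r_def)
  have w_eq: "w = sc (of_real r) e" using r by (simp add: e_def)
  have ee: "ip e e = 1" using r by (simp add: e_def ip_scale_left ip_scale_right power2_eq_square)
  have fe: "ip (f a) e = 0" for a
    using ip_orth_proj[OF f] by (simp add: e_def w_def ip_scale_right ip_diff_right)
  then have ef: "ip e (f a) = 0" for a using ip_cnj_swap[of "f a" e] by simp
  have ip_e_fixed: "ip e y = 0" if "orth_proj f y = y" for y
    using ip_orth_proj_eq_0[of e f y, OF ef] that by simp
  show ?thesis
  proof
    show "orthonormal_or_zero (f(b := e))"
      using f ee fe ef unfolding orthonormal_or_zero_def by auto
    have "orth_proj f x \<in> vs.span (insert x (range f))"
      using vs.span_mono[of "range f" "insert x (range f)"] orth_proj_in_span[of f x] by blast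
    then show "e \<in> vs.span (insert x (range f))"
      unfolding e_def w_def by (intro vs.span_scale vs.span_diff) (auto intro: vs.span_base)
    have "ip e x = ip e w"
      using ip_orth_proj_eq_0[of e f x, OF ef] by (simp add: w_def ip_diff_right)
    also have "\<dots> = of_real r" using r by (simp add: w_eq ip_scale_right ee)
    finally show "orth_proj (f(b := e)) x = x"
      by (simp add: orth_proj_fun_upd[of f b e, OF fb] w_eq[symmetric] w_def)
    show "orth_proj (f(b := e)) y = y" if "orth_proj f y = y" for y
      using that by (simp add: orth_proj_fun_upd[of f b e, OF fb] ip_e_fixed)
  qed
qed

lemma gram_schmidt:
  fixes v :: "'n::finite \<Rightarrow> 'h"
  obtains f :: "'n \<Rightarrow> 'h"
  where "orthonormal_or_zero f" "range f \<subseteq> vs.span (range v)" "\<And>b. orth_proj f (v b) = v b"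
proof -
  have "\<exists>f :: 'n \<Rightarrow> 'h. orthonormal_or_zero f \<and> range f \<subseteq> vs.span (range v) \<and>
          (\<forall>a. a \<notin> B \<longrightarrow> f a = 0) \<and> (\<forall>b\<in>B. orth_proj f (v b) = v b)" for B :: "'n set"
  proof (induction B rule: finite_induct[OF finite])
    case 1
    show ?case by (intro exI[of _ "\<lambda>_. 0"]) (auto simp: orthonormal_or_zero_def vs.span_zero)
  next
    case (2 b B)
    then obtain f where f: "orthonormal_or_zero f" "range f \<subseteq> vs.span (range v)"
      "\<forall>a. a \<notin> B \<longrightarrow> f a = 0" "\<forall>b\<in>B. orth_proj f (v b) = v b" by blast
    obtain e where e: "orthonormal_or_zero (f(b := e))" "e \<in> vs.span (insert (v b) (range f))"
      "orth_proj (f(b := e)) (v b) = v b" "\<And>y. orth_proj f y = y \<Longrightarrow> orth_proj (f(b := e)) y = y"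
      using orthonormal_or_zero_extend[OF f(1)] f(3) 2(2) by metis
    have span_sub: "vs.span (insert (v b) (range f)) \<subseteq> vs.span (range v)"
      using f(2) by (intro vs.span_minimal) (auto intro: vs.span_base)
    define g where "g = f(b := e)"
    show ?case
    proof (intro exI[of _ g] conjI allI ballI impI subsetI)
      show "orthonormal_or_zero g" using e(1) by (simp add: g_def)
      show "y \<in> vs.span (range v)" if "y \<in> range g" for y
        using that e(2) f(2) span_sub by (auto simp: g_def)
      show "g a = 0" if "a \<notin> insert b B" for a using that f(3) by (simp add: g_def)
      show "orth_proj g (v c) = v c" if "c \<in> insert b B" for c
      proof (cases "c = b")
        case True
        then show ?thesis using e(3) by (simp add: g_def)
      next
        case False
        then show ?thesis using that e(4) f(4) by (simp add: g_def)
      qed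
    qed
  qed
  from this[of UNIV] obtain f :: "'n \<Rightarrow> 'h" where
    "orthonormal_or_zero f" "range f \<subseteq> vs.span (range v)" "\<And>b. orth_proj f (v b) = v b"
    by auto
  then show ?thesis by (rule that)
qed

definition coeff_matrix :: "('n::finite \<Rightarrow> 'h) \<Rightarrow> ('h \<Rightarrow> 'h) \<Rightarrow> complex^'n^'n" where
  "coeff_matrix f T = (\<chi> a b. ip (f a) (T (f b)))"

lemma coeff_matrix_comp:
  assumes T: "linear_on sc UNIV T" and T': "\<And>b. orth_proj f (T' (f b)) = T' (f b)"
  shows "coeff_matrix f (T \<circ> T') = coeff_matrix f T ** coeff_matrix f T'"
proof -
  have "ip (f a) (T (T' (f b))) = ip (f a) (T (orth_proj f (T' (f b))))" for a b
    by (simp only: T')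
  then show ?thesis
    using T by (simp add: vec_eq_iff coeff_matrix_def matrix_matrix_mult_def orth_proj_def
        linear_on_sum linear_on_scale ip_sum_right ip_scale_right mult.commute)
qed

lemma isometry_fixes_if_trace_eq:
  assumes iso: "\<And>x y. ip (T x) (T y) = ip x y"
    and trace: "trace (coeff_matrix f T) = trace (coeff_matrix f id)"
  shows "T (f a) = f a"
proof -
  define d where "d a = Re (ip (f a) (f a)) - Re (ip (f a) (T (f a)))" for a
  have norm_diff: "Re (ip (T (f a) - f a) (T (f a) - f a)) = 2 * d a" for a
    using ip_cnj_swap[of "f a" "T (f a)"]
    by (simp add: d_def ip_diff_left ip_diff_right iso)
  then have "d a \<ge> 0" for a using ip_self_real(2)[of "T (f a) - f a"] by simp
  moreover have "(\<Sum>a\<in>UNIV. d a) = 0"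
    using trace by (simp add: d_def trace_def coeff_matrix_def sum_subtractf flip: Re_sum)
  ultimately have "d a = 0" by (simp add: sum_nonneg_eq_0_iff)
  then have "ip (T (f a) - f a) (T (f a) - f a) = 0"
    using norm_diff ip_self_eq_Re by (metis mult_zero_right of_real_0)
  then have "T (f a) - f a = 0" by (rule ip_self_eq_0D)
  then show ?thesis by simp
qed

definition isometric_rep_SL2C :: "(complex^2^2 \<Rightarrow> 'h \<Rightarrow> 'h) \<Rightarrow> bool" where
  "isometric_rep_SL2C P \<longleftrightarrow>
     (\<forall>A\<in>SL2C. linear_on sc UNIV (P A) \<and> (\<forall>x y. ip (P A x) (P A y) = ip x y)) \<and>
     P (mat 1) = id \<and> (\<forall>A\<in>SL2C. \<forall>B\<in>SL2C. P (A ** B) = P A \<circ> P B)"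

lemma isometric_rep_SL2CD:
  assumes "isometric_rep_SL2C P" and "A \<in> SL2C"
  shows "linear_on sc UNIV (P A)" and "ip (P A x) (P A y) = ip x y"
    and "P (mat 1) = id" and "B \<in> SL2C \<Longrightarrow> P (A ** B) = P A \<circ> P B"
  using assms by (simp_all add: isometric_rep_SL2C_def)

lemma coeff_matrix_rep_mult:
  assumes P: "isometric_rep_SL2C P"
    and inv: "\<And>A b. A \<in> SL2C \<Longrightarrow> P A (v b) \<in> vs.span (range v)"
    and f: "range f \<subseteq> vs.span (range v)" "\<And>b. orth_proj f (v b) = v b"
    and "A \<in> SL2C" "B \<in> SL2C"
  shows "coeff_matrix f (P (A ** B)) = coeff_matrix f (P A) ** coeff_matrix f (P B)"
proof -
  have "P B (f c) \<in> vs.span (range v)" for c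
    using linear_on_span_invariant[OF isometric_rep_SL2CD(1)[OF P \<open>B \<in> SL2C\<close>]] inv f(1)
      \<open>B \<in> SL2C\<close> by blast
  then have "orth_proj f (P B (f c)) = P B (f c)" for c
    using linear_on_fixes_span[OF linear_on_orth_proj] f(2) by blast
  from coeff_matrix_comp[of "P A" f "P B", OF isometric_rep_SL2CD(1)[OF P \<open>A \<in> SL2C\<close>] this]
  show ?thesis
    using isometric_rep_SL2CD(4)[OF P \<open>A \<in> SL2C\<close> \<open>B \<in> SL2C\<close>] by simp
qed

theorem isometric_rep_SL2C_fixes_invariant_family:
  fixes v :: "'n::finite \<Rightarrow> 'h"
  assumes P: "isometric_rep_SL2C P"
    and inv: "\<And>A b. A \<in> SL2C \<Longrightarrow> P A (v b) \<in> vs.span (range v)"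
    and A: "A \<in> SL2C"
  shows "P A (v b) = v b"
proof -
  obtain f :: "'n \<Rightarrow> 'h" where f: "orthonormal_or_zero f" "range f \<subseteq> vs.span (range v)"
    "\<And>b. orth_proj f (v b) = v b"
    using gram_schmidt[of v] by blast
  define R where "R B = coeff_matrix f (P B)" for B
  have R_mult: "R (B ** C) = R B ** R C" if "B \<in> SL2C" "C \<in> SL2C" for B C
    unfolding R_def using coeff_matrix_rep_mult[OF P inv f(2,3) that] .
  have fixes_v: "P B (v b) = v b" if B: "B \<in> SL2C" and "trace (R B) = trace (R (mat 1))" for B
  proof (rule linear_on_fixes_span[OF isometric_rep_SL2CD(1)[OF P B]])
    show "P B x = x" if "x \<in> range f" for x
      using isometry_fixes_if_trace_eq[of "P B" f] isometric_rep_SL2CD(2,3)[OF P B]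
        \<open>trace (R B) = _\<close> that by (auto simp: R_def)
    show "v b \<in> vs.span (range f)" using orth_proj_in_span[of f "v b"] by (simp add: f(3))
  qed
  show ?thesis
    using A
  proof (induction rule: SL2C_unipotent_induct)
    case (upper t)
    show ?case by (intro fixes_v upper_unipotent_SL2C trace_hom_upper_unipotent R_mult)
  next
    case (lower t)
    show ?case by (intro fixes_v lower_unipotent_SL2C trace_hom_lower_unipotent R_mult)
  next
    case (mult B C)
    then show ?case by (simp add: isometric_rep_SL2CD(4)[OF P])
  qed
qed

lemma covariant_family_fixed:
  fixes v :: "'n::finite \<Rightarrow> 'h"
  assumes P: "isometric_rep_SL2C P"
    and cov: "\<And>A a. A \<in> SL2C \<Longrightarrow> P A (v a) = (\<Sum>b\<in>UNIV. sc (K A a b) (v b))"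
    and B: "B \<in> SL2C"
  shows "v a = (\<Sum>b\<in>UNIV. sc (K (matrix_inv B) a b) (v b))"
proof -
  have "P A (v a) \<in> vs.span (range v)" if "A \<in> SL2C" for A a
    unfolding cov[OF that] by (intro vs.span_sum vs.span_scale vs.span_base) simp
  from isometric_rep_SL2C_fixes_invariant_family[OF P this matrix_inv_SL2C(1)[OF B]]
  have "v a = P (matrix_inv B) (v a)" by simp
  also have "\<dots> = (\<Sum>b\<in>UNIV. sc (K (matrix_inv B) a b) (v b))"
    by (rule cov[OF matrix_inv_SL2C(1)[OF B]])
  finally show ?thesis .
qed

lemma invariant_family_eq_0:
  assumes S: "no_trivial_subrep S"
    and inv: "\<And>B a. B \<in> SL2C \<Longrightarrow> v a = (\<Sum>b\<in>UNIV. sc (S B $ a $ b) (v b))"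
  shows "v a = 0"
proof -
  have "S B *v (\<chi> b. ip w (v b)) = (\<chi> b. ip w (v b))" if "B \<in> SL2C" for B w
  proof -
    have coord: "(\<Sum>b\<in>UNIV. S B $ a $ b * ip w (v b)) = ip w (v a)" for a
    proof -
      have "ip w (v a) = ip w (\<Sum>b\<in>UNIV. sc (S B $ a $ b) (v b))"
        using inv[OF that, of a] by (rule arg_cong)
      then show ?thesis by (simp add: ip_sum_right ip_scale_right)
    qed
    show ?thesis by (simp add: vec_eq_iff matrix_vector_mult_def coord)
  qed
  then have "(\<chi> b. ip (v a) (v b)) = 0" using S by (simp add: no_trivial_subrep_def)
  then have "ip (v a) (v a) = 0" by (simp add: vec_eq_iff)
  then show ?thesis by (rule ip_self_eq_0D)
qed

lemma conj_invariant_family_eq_0: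
  assumes S: "no_trivial_subrep S"
    and inv: "\<And>B a. B \<in> SL2C \<Longrightarrow> v a = (\<Sum>b\<in>UNIV. sc (cnj (S B $ a $ b)) (v b))"
  shows "v a = 0"
proof -
  have "S B *v (\<chi> b. ip (v b) w) = (\<chi> b. ip (v b) w)" if "B \<in> SL2C" for B w
  proof -
    have coord: "(\<Sum>b\<in>UNIV. S B $ a $ b * ip (v b) w) = ip (v a) w" for a
    proof -
      have "ip (v a) w = ip (\<Sum>b\<in>UNIV. sc (cnj (S B $ a $ b)) (v b)) w"
        using inv[OF that, of a] by (rule arg_cong)
      then show ?thesis by (simp add: ip_sum_left ip_scale_left)
    qed
    show ?thesis by (simp add: vec_eq_iff matrix_vector_mult_def coord)
  qed
  then have "(\<chi> b. ip (v b) (v a)) = 0" using S by (simp add: no_trivial_subrep_def)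
  then have "ip (v a) (v a) = 0" by (simp add: vec_eq_iff)
  then show ?thesis by (rule ip_self_eq_0D)
qed

end

lemma lorentz_0: "lorentz A 0 = 0"
proof -
  have "herm 0 = 0" by (simp add: herm_def vec_eq_iff complex_eq_iff)
  then have "A ** herm 0 ** cadj A = 0" by simp
  then show ?thesis unfolding lorentz_def Let_def by (simp add: vec_eq_iff)
qed

locale covariant_field = hilbert_space sc ip
  for sc :: "complex \<Rightarrow> 'h::ab_group_add \<Rightarrow> 'h" and ip +
  fixes D :: "'h set"
    and U :: "(real^4) \<times> (complex^2^2) \<Rightarrow> 'h \<Rightarrow> 'h"
    and S :: "complex^2^2 \<Rightarrow> complex^'n::finite^'n"
    and \<psi> :: "'n \<Rightarrow> real^4 \<Rightarrow> 'h \<Rightarrow> 'h"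
    and \<Omega> :: 'h
  assumes D_dense: "dense_in ip D"
    and U_rep: "unitary_rep_poincare sc ip U"
    and S_one: "S (mat 1) = mat 1"
    and S_nt: "no_trivial_subrep S"
    and U_adj_D: "\<And>g. g \<in> poincare \<Longrightarrow> adj ip UNIV (U g) ` D \<subseteq> D"
    and D_adj_dom: "\<And>\<alpha> x. D \<subseteq> adj_dom ip D (\<psi> \<alpha> x)"
    and covariance: "\<And>a A x \<alpha> v. (a, A) \<in> poincare \<Longrightarrow> v \<in> D \<Longrightarrow>
          U (a, A) (\<psi> \<alpha> x (adj ip UNIV (U (a, A)) v)) =
          (\<Sum>\<beta>\<in>UNIV. sc (S (matrix_inv A) $ \<alpha> $ \<beta>) (\<psi> \<beta> (lorentz A x + a) v))"
    and vacuum_D: "\<Omega> \<in> D"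
    and vacuum_invariant: "\<And>g. g \<in> poincare \<Longrightarrow> U g \<Omega> = \<Omega>"
begin

lemma U_unitary: "g \<in> poincare \<Longrightarrow> unitary_op sc ip (U g)"
  using U_rep by (simp add: unitary_rep_poincare_def)

lemma U_isometric: "g \<in> poincare \<Longrightarrow> ip (U g x) (U g y) = ip x y"
  using U_unitary by (simp add: unitary_op_def)

lemma U_adj_vacuum: "g \<in> poincare \<Longrightarrow> adj ip UNIV (U g) \<Omega> = \<Omega>"
  using unitary_op_adj(1)[OF U_unitary] vacuum_invariant by metis

lemma isometric_rep_SL2C_U: "isometric_rep_SL2C (\<lambda>A. U (0, A))"
proof -
  have "pmult (0, A) (0, B) = (0, A ** B)" for A B by (simp add: pmult_def lorentz_0)
  then show ?thesis
    using U_rep unfolding isometric_rep_SL2C_def unitary_rep_poincare_def unitary_op_def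
    by (auto simp: poincare_def) metis
qed

lemma field_vacuum_covariant:
  "A \<in> SL2C \<Longrightarrow> U (0, A) (\<psi> \<alpha> 0 \<Omega>) = (\<Sum>\<beta>\<in>UNIV. sc (S (matrix_inv A) $ \<alpha> $ \<beta>) (\<psi> \<beta> 0 \<Omega>))"
  using covariance[of 0 A \<Omega> \<alpha> 0] U_adj_vacuum[of "(0, A)"] vacuum_D
  by (simp add: poincare_def lorentz_0)

lemma ip_adj_field_vacuum: "w \<in> D \<Longrightarrow> ip (adj ip D (\<psi> \<alpha> x) \<Omega>) w = ip \<Omega> (\<psi> \<alpha> x w)"
  using ip_adj[OF D_dense] D_adj_dom vacuum_D by blast

lemma adj_field_vacuum_covariant:
  assumes A: "A \<in> SL2C"
  shows "U (0, A) (adj ip D (\<psi> \<alpha> 0) \<Omega>) =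
    (\<Sum>\<beta>\<in>UNIV. sc (cnj (S (matrix_inv A) $ \<alpha> $ \<beta>)) (adj ip D (\<psi> \<beta> 0) \<Omega>))"
    (is "?lhs = ?rhs")
proof -
  let ?G = "U (0, A)" and ?s = "\<lambda>\<beta>. S (matrix_inv A) $ \<alpha> $ \<beta>"
  have g: "(0, A) \<in> poincare" using A by (simp add: poincare_def)
  have "ip ?lhs w = ip ?rhs w" if w: "w \<in> D" for w
  proof -
    let ?w' = "adj ip UNIV ?G w"
    have w': "?w' \<in> D" using U_adj_D[OF g] w by blast
    have "ip ?lhs w = ip (?G (adj ip D (\<psi> \<alpha> 0) \<Omega>)) (?G ?w')"
      by (simp add: unitary_op_adj(2)[OF U_unitary[OF g]])
    also have "\<dots> = ip \<Omega> (\<psi> \<alpha> 0 ?w')"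
      by (simp add: U_isometric[OF g] ip_adj_field_vacuum[OF w'])
    also have "\<dots> = ip (?G \<Omega>) (?G (\<psi> \<alpha> 0 ?w'))"
      by (simp add: U_isometric[OF g])
    also have "\<dots> = (\<Sum>\<beta>\<in>UNIV. ?s \<beta> * ip \<Omega> (\<psi> \<beta> 0 w))"
      using covariance[OF g w, of \<alpha> 0] vacuum_invariant[OF g]
      by (simp add: lorentz_0 ip_sum_right ip_scale_right)
    also have "\<dots> = ip ?rhs w"
      by (simp add: ip_sum_left ip_scale_left ip_adj_field_vacuum[OF w])
    finally show ?thesis .
  qed
  then have "ip (?lhs - ?rhs) w = 0" if "w \<in> D" for w
    using that by (simp add: ip_diff_left)
  then show ?thesis using eq_0_if_orthogonal_dense[OF D_dense] by fastforce
qed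

lemma field_vacuum_at_origin: "\<psi> \<alpha> 0 \<Omega> = 0"
proof (rule invariant_family_eq_0[OF S_nt])
  fix B \<alpha>' assume "B \<in> SL2C"
  then show "\<psi> \<alpha>' 0 \<Omega> = (\<Sum>\<beta>\<in>UNIV. sc (S B $ \<alpha>' $ \<beta>) (\<psi> \<beta> 0 \<Omega>))"
    using covariant_family_fixed[OF isometric_rep_SL2C_U field_vacuum_covariant]
    by (simp add: matrix_inv_SL2C)
qed

lemma adj_field_vacuum_at_origin: "adj ip D (\<psi> \<alpha> 0) \<Omega> = 0"
proof (rule conj_invariant_family_eq_0[OF S_nt])
  fix B \<alpha>' assume "B \<in> SL2C"
  then show "adj ip D (\<psi> \<alpha>' 0) \<Omega> =
      (\<Sum>\<beta>\<in>UNIV. sc (cnj (S B $ \<alpha>' $ \<beta>)) (adj ip D (\<psi> \<beta> 0) \<Omega>))"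
    using covariant_family_fixed[OF isometric_rep_SL2C_U adj_field_vacuum_covariant]
    by (simp add: matrix_inv_SL2C)
qed

lemma translation_covariance:
  assumes "w \<in> D"
  shows "U (x, mat 1) (\<psi> \<alpha> 0 (adj ip UNIV (U (x, mat 1)) w)) = \<psi> \<alpha> x w"
proof -
  have "(\<Sum>\<beta>\<in>UNIV. sc (mat 1 $ \<alpha> $ \<beta>) (\<psi> \<beta> x w)) = (\<Sum>\<beta>\<in>UNIV. if \<beta> = \<alpha> then \<psi> \<beta> x w else 0)"
    by (intro sum.cong) (auto simp: mat_def)
  then show ?thesis
    using covariance[of x "mat 1" w \<alpha> 0] assms
    by (simp add: poincare_def SL2C_one matrix_inv_one_SL2C S_one lorentz_0)
qed

lemma field_annihilates_vacuum: "\<psi> \<alpha> x \<Omega> = 0"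
proof -
  have g: "(x, mat 1) \<in> poincare" by (simp add: poincare_def SL2C_one)
  have "\<psi> \<alpha> x \<Omega> = U (x, mat 1) (\<psi> \<alpha> 0 \<Omega>)"
    using translation_covariance[OF vacuum_D, where x = x and \<alpha> = \<alpha>] U_adj_vacuum[OF g] by simp
  also have "\<dots> = 0"
    using U_unitary[OF g] by (simp add: field_vacuum_at_origin unitary_op_def linear_on_zero)
  finally show ?thesis .
qed

lemma adj_field_annihilates_vacuum: "adj ip D (\<psi> \<alpha> x) \<Omega> = 0"
proof (rule adj_eqI[OF D_dense])
  fix w assume w: "w \<in> D"
  let ?G = "U (x, mat 1)"
  have g: "(x, mat 1) \<in> poincare" by (simp add: poincare_def SL2C_one)
  have "ip \<Omega> (\<psi> \<alpha> x w) = ip (?G \<Omega>) (?G (\<psi> \<alpha> 0 (adj ip UNIV ?G w)))"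
    using translation_covariance[OF w] vacuum_invariant[OF g] by simp
  also have "\<dots> = ip (adj ip D (\<psi> \<alpha> 0) \<Omega>) (adj ip UNIV ?G w)"
    using U_adj_D[OF g] w by (simp add: U_isometric[OF g] ip_adj_field_vacuum image_subset_iff)
  finally show "ip 0 w = ip \<Omega> (\<psi> \<alpha> x w)" by (simp add: adj_field_vacuum_at_origin)
qed

end

theorem theorem3:
  fixes sc :: "complex \<Rightarrow> 'h::ab_group_add \<Rightarrow> 'h"
    and ip :: "'h \<Rightarrow> 'h \<Rightarrow> complex"
    and D :: "'h set"
    and U :: "(real^4) \<times> (complex^2^2) \<Rightarrow> 'h \<Rightarrow> 'h"
    and S :: "complex^2^2 \<Rightarrow> complex^'n::finite^'n"
    and \<psi> :: "'n \<Rightarrow> real^4 \<Rightarrow> 'h \<Rightarrow> 'h"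
  assumes H: "complex_hilbert_space sc ip"
    and D_sub: "is_subspace sc D"
    and D_dense: "dense_in ip D"
    and U_rep: "unitary_rep_poincare sc ip U"
    and S_rep: "rep_SL2C S"
    and S_mf: "multiplicity_free S"
    and S_nt: "no_trivial_subrep S"
    and \<psi>_lin: "\<And>\<alpha> x. linear_on sc D (\<psi> \<alpha> x)"
    and A1: "\<And>g. g \<in> poincare \<Longrightarrow> U g ` D \<subseteq> D \<and> adj ip UNIV (U g) ` D \<subseteq> D"
    and A2: "\<And>\<alpha> x. \<psi> \<alpha> x ` D \<subseteq> D \<and> D \<subseteq> adj_dom ip D (\<psi> \<alpha> x) \<and> adj ip D (\<psi> \<alpha> x) ` D \<subseteq> D"
    and A3: "\<And>a A x \<alpha> v. (a, A) \<in> poincare \<Longrightarrow> v \<in> D \<Longrightarrow>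
               U (a, A) (\<psi> \<alpha> x (adj ip UNIV (U (a, A)) v)) =
               (\<Sum>\<beta>\<in>UNIV. sc (S (matrix_inv A) $ \<alpha> $ \<beta>) (\<psi> \<beta> (lorentz A x + a) v))"
    and A4: "\<Omega> \<in> D" "\<Omega> \<noteq> 0" "\<And>g. g \<in> poincare \<Longrightarrow> U g \<Omega> = \<Omega>"
  shows "\<forall>x \<alpha>. \<psi> \<alpha> x \<Omega> = 0 \<and> adj ip D (\<psi> \<alpha> x) \<Omega> = 0"
proof -
  interpret covariant_field sc ip D U S \<psi> \<Omega>
    by unfold_locales
      (use H D_dense U_rep S_rep S_nt A1 A2 A3 A4 in \<open>simp_all add: rep_SL2C_def\<close>)
  show ?thesis using field_annihilates_vacuum adj_field_annihilates_vacuum by blast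
qed

end
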